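(* Let $k\in\mathbb Z_{>0}$, $1+\frac{k+2}{(k+1)n}<p<1+\frac{k+1}{kn}$, $u_0\in L^1_1(\mathbb R^n)\cap L^\infty(\mathbb R^n)$, and $u$ the global solution with initial datum $u_0$. Then for all $t\ge1$, $\mathcal A_{1,k}(t)-\mathcal A_{0,k}(t)=t^{-1/2}\delta_t\big(\mathcal A_{1,k}(1)-\mathcal A_{0,k}(1)\big)$, and $$\mathcal A_{1,k}(1)-\mathcal A_{0,k}(1)=\frac12\sum_{j=1}^n\big(\mathcal M_{e_j}(u_0)-a_j\mathcal M_0(\psi_{0,k})\big)x_jG_1.$$ In particular, $\mathcal A_{1,k}(1)-\mathcal A_{0,k}(1)\not\equiv0$ if and only if there exists $j$ with $\mathcal M_{e_j}(u_0)-a_j\mathcal M_0(\psi_{0,k})\ne0$.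
   Context: Let $n\ge1$, $a=(a_1,\dots,a_n)\in\mathbb R^n\setminus\{0\}$, $p\in(1,\infty)$, and let $f\in C^1(\mathbb R)$, $f\not\equiv0$, $f(0)=0$, satisfy $|f(\xi)-f(\eta)|\le C(|\xi|^{p-1}+|\eta|^{p-1})|\xi-\eta|$. $L^1_1=\{\varphi\in L^1(\mathbb R^n): x_j\varphi\in L^1\ \forall j\}$. $G_t(x)=(4\pi t)^{-n/2}e^{-|x|^2/(4t)}$, $e^{t\Delta}\varphi=G_t*\varphi$. The global solution for $u_0\in L^1\cap L^\infty$ is the unique $u\in (C\cap L^\infty)([0,\infty);L^1)\cap(C\cap L^\infty)((0,\infty);L^\infty)$ with $u(t)=e^{t\Delta}u_0+\int_0^ta\cdot\nabla e^{(t-s)\Delta}f(u(s))ds$ for all $t>0$. $(\delta_t\varphi)(x)=t^{-n/2}\varphi(t^{-1/2}x)$; $\mathcal M_0(\varphi)=\int\varphi$; $\mathcal M_{e_j}(\varphi)=\int x_j\varphi$; $\mathcal A_0(t)=\mathcal M_0(u_0)G_t$. $\mathcal A_{0,0}=\mathcal A_0$, and for $k\ge1$, $\mathcal A_{0,k}(t)=\mathcal A_0(t)+\int_0^1a\cdot\nabla e^{(t-s)\Delta}f(\mathcal A_0(s))ds+\int_1^ta\cdot\nabla e^{(t-s)\Delta}f(\mathcal A_{0,k-1}(s))ds$. $\Lambda_{e_j,0}(t;\varphi)=-\frac12t^{-1/2}\mathcal M_0(\varphi)\delta_t(x_jG_1)$. $\psi_{0,k}=\int_0^1(f(u(s))-f(\mathcal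 A_0(s)))ds+\int_1^\infty(f(u(s))-f(\mathcal A_{0,k-1}(s)))ds$; $\mathcal A_{1,k}(t)=\mathcal A_{0,k}(t)+\frac12t^{-1/2}\sum_j\mathcal M_{e_j}(u_0)\delta_t(x_jG_1)+\sum_ja_j\Lambda_{e_j,0}(t;\psi_{0,k})$. *)

theory Defs
  imports "HOL-Analysis.Analysis"
begin

text \<open>Functions on R^n are modelled as real ^ 'n \<Rightarrow> real, with n = CARD('n).\<close>

definition gauss :: "real \<Rightarrow> real ^ 'n \<Rightarrow> real" where
  "gauss t x = (4 * pi * t) powr (- real CARD('n) / 2) * exp (- (norm x)\<^sup>2 / (4 * t))"

definition heat :: "real \<Rightarrow> (real ^ 'n \<Rightarrow> real) \<Rightarrow> real ^ 'n \<Rightarrow> real" where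
  "heat t \<phi> x = (\<integral>y. gauss t (x - y) * \<phi> y \<partial>lborel)"

definition grad_heat :: "real ^ 'n \<Rightarrow> real \<Rightarrow> (real ^ 'n \<Rightarrow> real) \<Rightarrow> real ^ 'n \<Rightarrow> real" where
  "grad_heat a t \<phi> x = (\<integral>y. frechet_derivative (gauss t) (at (x - y)) a * \<phi> y \<partial>lborel)"

definition dil :: "real \<Rightarrow> (real ^ 'n \<Rightarrow> real) \<Rightarrow> real ^ 'n \<Rightarrow> real" where
  "dil t \<phi> x = t powr (- real CARD('n) / 2) * \<phi> (t powr (-1/2) *\<^sub>R x)"

definition M0 :: "(real ^ 'n \<Rightarrow> real) \<Rightarrow> real" where
  "M0 \<phi> = (\<integral>x. \<phi> x \<partial>lborel)"

definition Me :: "'n \<Rightarrow> (real ^ 'n \<Rightarrow> real) \<Rightarrow> real" where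
  "Me j \<phi> = (\<integral>x. x $ j * \<phi> x \<partial>lborel)"

definition A0 :: "(real ^ 'n \<Rightarrow> real) \<Rightarrow> real \<Rightarrow> real ^ 'n \<Rightarrow> real" where
  "A0 u0 t x = M0 u0 * gauss t x"

fun A0k :: "real ^ 'n \<Rightarrow> (real \<Rightarrow> real) \<Rightarrow> (real ^ 'n \<Rightarrow> real) \<Rightarrow> nat \<Rightarrow> real \<Rightarrow> real ^ 'n \<Rightarrow> real" where
  "A0k a f u0 0 t x = A0 u0 t x"
| "A0k a f u0 (Suc k) t x = A0 u0 t x
     + (LBINT s=0..1. grad_heat a (t - s) (\<lambda>y. f (A0 u0 s y)) x)
     + (LBINT s=1..ereal t. grad_heat a (t - s) (\<lambda>y. f (A0k a f u0 k s y)) x)"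

definition Lam :: "'n \<Rightarrow> real \<Rightarrow> (real ^ 'n \<Rightarrow> real) \<Rightarrow> real ^ 'n \<Rightarrow> real" where
  "Lam j t \<phi> x = - (1/2) * t powr (-1/2) * M0 \<phi> * dil t (\<lambda>y. y $ j * gauss 1 y) x"

definition psi0k :: "(real \<Rightarrow> real ^ 'n \<Rightarrow> real) \<Rightarrow> real ^ 'n \<Rightarrow> (real \<Rightarrow> real) \<Rightarrow> (real ^ 'n \<Rightarrow> real) \<Rightarrow> nat \<Rightarrow> real ^ 'n \<Rightarrow> real" where
  "psi0k u a f u0 k x = (LBINT s=0..1. f (u s x) - f (A0 u0 s x))
     + (LBINT s=1..\<infinity>. f (u s x) - f (A0k a f u0 (k - 1) s x))"

definition A1k :: "(real \<Rightarrow> real ^ 'n \<Rightarrow> real) \<Rightarrow> real ^ 'n \<Rightarrow> (real \<Rightarrow> real) \<Rightarrow> (real ^ 'n \<Rightarrow> real) \<Rightarrow> nat \<Rightarrow> real \<Rightarrow> real ^ 'n \<Rightarrow> real" where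
  "A1k u a f u0 k t x = A0k a f u0 k t x
     + (1/2) * t powr (-1/2) * (\<Sum>j\<in>UNIV. Me j u0 * dil t (\<lambda>y. y $ j * gauss 1 y) x)
     + (\<Sum>j\<in>UNIV. a $ j * Lam j t (psi0k u a f u0 k) x)"

text \<open>The global solution: u \<in> (C \<inter> L^\<infinity>)([0,\<infinity>);L^1) \<inter> (C \<inter> L^\<infinity>)((0,\<infinity>);L^\<infinity>)
  satisfying the Duhamel formula (as an identity in L^1, i.e. a.e. in x) for all t > 0.\<close>
definition global_solution :: "real ^ 'n \<Rightarrow> (real \<Rightarrow> real) \<Rightarrow> (real ^ 'n \<Rightarrow> real) \<Rightarrow> (real \<Rightarrow> real ^ 'n \<Rightarrow> real) \<Rightarrow> bool" where
  "global_solution a f u0 u \<longleftrightarrow>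
     (\<forall>t\<ge>0. integrable lborel (u t))
   \<and> (\<forall>t0\<ge>0. ((\<lambda>t. \<integral>x. \<bar>u t x - u t0 x\<bar> \<partial>lborel) \<longlongrightarrow> 0) (at t0 within {0..}))
   \<and> (\<exists>B. \<forall>t\<ge>0. (\<integral>x. \<bar>u t x\<bar> \<partial>lborel) \<le> B)
   \<and> (\<exists>B. \<forall>t>0. AE x in lborel. \<bar>u t x\<bar> \<le> B)
   \<and> (\<forall>t0>0. \<forall>e>0. \<exists>d>0. \<forall>t>0. \<bar>t - t0\<bar> < d \<longrightarrow> (AE x in lborel. \<bar>u t x - u t0 x\<bar> \<le> e))
   \<and> (\<forall>t>0. AE x in lborel.
        u t x = heat t u0 x + (LBINT s=0..ereal t. grad_heat a (t - s) (\<lambda>y. f (u s y)) x))"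

end

theory Submission
  imports Defs
begin

text \<open>Once the definitions are unfolded, the statement is pure linear algebra: the two correction
  terms of \<open>A1k\<close> are both multiples of \<open>t powr (-1/2) * dil t (x\<^sub>j G\<^sub>1)\<close>, and the functions
  \<open>x\<^sub>j G\<^sub>1\<close> are linearly independent, as evaluating at the unit vectors shows. In particular
  none of the hypotheses on \<open>f\<close>, \<open>p\<close>, \<open>u\<^sub>0\<close> and \<open>u\<close> is needed; they only ensure that
  the quantities involved are meaningful.\<close>

lemma gauss_pos: "0 < t \<Longrightarrow> 0 < gauss t x"
  unfolding gauss_def by simp

lemma dil_sum:
  "dil t (\<lambda>y. \<Sum>j\<in>J. c j * \<phi> j y) x = (\<Sum>j\<in>J. c j * dil t (\<phi> j) x)"
  unfolding dil_def by (simp add: sum_distrib_left algebra_simps)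

lemma dil_1 [simp]: "dil 1 \<phi> = \<phi>"
  unfolding dil_def by simp

lemma dil_cmult: "dil t (\<lambda>y. c * \<phi> y) x = c * dil t \<phi> x"
  unfolding dil_def by simp

lemma coord_gauss_combination_eq_0_iff:
  fixes c :: "'n::finite \<Rightarrow> real"
  assumes "0 < t"
  shows "(\<lambda>x::real^'n. \<Sum>j\<in>UNIV. c j * (x $ j * gauss t x)) = (\<lambda>_. 0) \<longleftrightarrow> (\<forall>j. c j = 0)"
proof
  assume vanish: "(\<lambda>x::real^'n. \<Sum>j\<in>UNIV. c j * (x $ j * gauss t x)) = (\<lambda>_. 0)"
  show "\<forall>j. c j = 0"
  proof
    fix j
    have "c i * (axis j 1 $ i * gauss t (axis j 1 :: real^'n))
          = (if i = j then c j * gauss t (axis j 1 :: real^'n) else 0)" for i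
      by (simp add: axis_def)
    then have "(\<Sum>i\<in>UNIV. c i * (axis j 1 $ i * gauss t (axis j 1 :: real^'n)))
          = c j * gauss t (axis j 1 :: real^'n)"
      by simp
    with fun_cong[OF vanish, of "axis j 1"] show "c j = 0"
      using gauss_pos[OF assms, of "axis j 1 :: real^'n"] by simp
  qed
qed simp

lemma A1k_minus_A0k:
  "A1k u a f u0 k t x - A0k a f u0 k t x =
   (1/2) * t powr (-1/2) *
     (\<Sum>j\<in>UNIV. (Me j u0 - a $ j * M0 (psi0k u a f u0 k)) * dil t (\<lambda>y. y $ j * gauss 1 y) x)"
  unfolding A1k_def Lam_def
  by (simp add: sum_distrib_left sum_subtractf algebra_simps sum_negf)

lemma A1k_minus_A0k_at_1:
  "A1k u a f u0 k 1 x - A0k a f u0 k 1 x =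
   (1/2) * (\<Sum>j\<in>UNIV. (Me j u0 - a $ j * M0 (psi0k u a f u0 k)) * (x $ j * gauss 1 x))"
  unfolding A1k_minus_A0k by simp

theorem lemma4p4:
  fixes a :: "real ^ 'n" and f :: "real \<Rightarrow> real" and p C :: real and k :: nat
    and u0 :: "real ^ 'n \<Rightarrow> real" and u :: "real \<Rightarrow> real ^ 'n \<Rightarrow> real"
  assumes a_ne: "a \<noteq> 0"
    and p_gt1: "1 < p"
    and f_C1: "f C1_differentiable_on UNIV"
    and f_nz: "f \<noteq> (\<lambda>_. 0)"
    and f0: "f 0 = 0"
    and f_lip: "\<And>\<xi> \<eta>. \<bar>f \<xi> - f \<eta>\<bar> \<le> C * (\<bar>\<xi>\<bar> powr (p - 1) + \<bar>\<eta>\<bar> powr (p - 1)) * \<bar>\<xi> - \<eta>\<bar>"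
    and k_pos: "0 < k"
    and p_lo: "1 + real (k + 2) / (real (k + 1) * real CARD('n)) < p"
    and p_hi: "p < 1 + real (k + 1) / (real k * real CARD('n))"
    and u0_L1: "integrable lborel u0"
    and u0_L11: "\<And>j. integrable lborel (\<lambda>x. x $ j * u0 x)"
    and u0_Linf: "\<exists>B. AE x in lborel. \<bar>u0 x\<bar> \<le> B"
    and u_sol: "global_solution a f u0 u"
  shows "(\<forall>t\<ge>1. (\<lambda>x. A1k u a f u0 k t x - A0k a f u0 k t x)
                 = (\<lambda>x. t powr (-1/2) * dil t (\<lambda>y. A1k u a f u0 k 1 y - A0k a f u0 k 1 y) x))
       \<and> (\<lambda>x. A1k u a f u0 k 1 x - A0k a f u0 k 1 x)
           = (\<lambda>x. (1/2) * (\<Sum>j\<in>UNIV. (Me j u0 - a $ j * M0 (psi0k u a f u0 k)) * (x $ j * gauss 1 x)))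
       \<and> ((\<lambda>x. A1k u a f u0 k 1 x - A0k a f u0 k 1 x) \<noteq> (\<lambda>_. 0)
           \<longleftrightarrow> (\<exists>j. Me j u0 - a $ j * M0 (psi0k u a f u0 k) \<noteq> 0))"
proof -
  define c where "c j = Me j u0 - a $ j * M0 (psi0k u a f u0 k)" for j
  have at_1: "(\<lambda>x. A1k u a f u0 k 1 x - A0k a f u0 k 1 x)
              = (\<lambda>x. (1/2) * (\<Sum>j\<in>UNIV. c j * (x $ j * gauss 1 x)))"
    by (simp add: A1k_minus_A0k_at_1 c_def)
  have self_similar: "A1k u a f u0 k t x - A0k a f u0 k t x
      = t powr (-1/2) * dil t (\<lambda>y. A1k u a f u0 k 1 y - A0k a f u0 k 1 y) x" for t x
    unfolding A1k_minus_A0k dil_cmult dil_sum by simp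
  have "(\<lambda>x::real^'n. (1/2) * (\<Sum>j\<in>UNIV. c j * (x $ j * gauss 1 x))) = (\<lambda>_. 0)
        \<longleftrightarrow> (\<forall>j. c j = 0)"
    using coord_gauss_combination_eq_0_iff[of 1 c] by (simp add: fun_eq_iff)
  then show ?thesis
    using self_similar at_1 by (auto simp: c_def)
qed

end
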